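(* Let $A\in\mathbb{R}^{m\times n}$ and $b\in\mathbb{R}^m$ be such that $S_+=\{z\in\mathbb{R}^n_+ : Az=b\}$ is nonempty, and let $x_0\in\mathbb{R}^n_{++}$. Let $(x_k)$ be generated by entropic mirror descent with the Polyak-type stepsize $$\alpha_k=\min\left\{\frac{f(x_k)}{\|\nabla f(x_k)\|^2_{x_k}},\ \frac{1.79}{\|\nabla f(x_k)\|_\infty}\right\},\qquad x_{k+1}=x_k\circ\exp(-\alpha_k\nabla f(x_k)),$$ where $f(x)=\frac12\|Ax-b\|_2^2$ (if $\nabla f(x_k)=0$ for some $k$, the sequence is kept constant from then on). Then $(x_k)$ converges to some $x^*\in S_+$, and for all $k\ge0$ $$\min_{0\le i\le k} f(x_i)\le \frac{4R\,(R+\|x^*\|_1)\max_{j\le n}\|A_{:j}\|_2^2}{k+1},\qquad R=D_h(x^*,x_0).$$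
   Context: $\mathbb{R}^n_+$, $\mathbb{R}^n_{++}$ denote the nonnegative and strictly positive orthants; $\circ$ is componentwise multiplication and $\exp$, squares etc. act componentwise. $\nabla f(x)=A^\top(Ax-b)$. For $x\in\mathbb{R}^n_+$ and $v\in\mathbb{R}^n$, $\|v\|_x^2:=\sum_i x_iv_i^2$. $A_{:j}$ is the $j$-th column of $A$. The entropy is $h(x)=\sum_i x_i(\log x_i-1)$ on $\mathbb{R}^n_+$ (with $0\log0=0$) and $D_h(x,y)=\sum_i\big(x_i\log\frac{x_i}{y_i}-x_i+y_i\big)$ for $x\in\mathbb{R}^n_+$, $y\in\mathbb{R}^n_{++}$. *)

theory Defs
  imports "HOL-Analysis.Analysis"
begin

definition lsq :: "real^'n^'m \<Rightarrow> real^'m \<Rightarrow> real^'n \<Rightarrow> real" where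
  "lsq A b x = (1/2) * (norm (A *v x - b))\<^sup>2"

definition lsq_grad :: "real^'n^'m \<Rightarrow> real^'m \<Rightarrow> real^'n \<Rightarrow> real^'n" where
  "lsq_grad A b x = transpose A *v (A *v x - b)"

definition local_norm_sq :: "real^'n \<Rightarrow> real^'n \<Rightarrow> real" where
  "local_norm_sq x v = (\<Sum>i\<in>UNIV. x $ i * (v $ i)\<^sup>2)"

definition inf_norm :: "real^'n \<Rightarrow> real" where
  "inf_norm v = Max ((\<lambda>i. \<bar>v $ i\<bar>) ` UNIV)"

definition one_norm :: "real^'n \<Rightarrow> real" where
  "one_norm v = (\<Sum>i\<in>UNIV. \<bar>v $ i\<bar>)"

definition polyak_step :: "real^'n^'m \<Rightarrow> real^'m \<Rightarrow> real^'n \<Rightarrow> real" where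
  "polyak_step A b x = min (lsq A b x / local_norm_sq x (lsq_grad A b x))
                           ((179/100) / inf_norm (lsq_grad A b x))"

definition emd_step :: "real^'n^'m \<Rightarrow> real^'m \<Rightarrow> real^'n \<Rightarrow> real^'n" where
  "emd_step A b x = (if lsq_grad A b x = 0 then x
     else (\<chi> i. x $ i * exp (- polyak_step A b x * lsq_grad A b x $ i)))"

definition entropy_breg :: "real^'n \<Rightarrow> real^'n \<Rightarrow> real" where
  "entropy_breg x y = (\<Sum>i\<in>UNIV.
     (if x $ i = 0 then 0 else x $ i * ln (x $ i / y $ i)) - x $ i + y $ i)"

definition feas_nonneg :: "real^'n^'m \<Rightarrow> real^'m \<Rightarrow> (real^'n) set" where
  "feas_nonneg A b = {z. (\<forall>i. z $ i \<ge> 0) \<and> A *v z = b}"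

definition max_col_sq :: "real^'n^'m \<Rightarrow> real" where
  "max_col_sq A = Max ((\<lambda>j. \<Sum>i\<in>UNIV. (A $ i $ j)\<^sup>2) ` UNIV)"

end

theory Submission
  imports Defs
begin

text \<open>
  For every z in S_+, the entropic distance D_h(z, x_k) decreases by at least 9/10 alpha_k f(x_k) per step:
  the three-point identity gives D_h(z, x_(k+1)) = D_h(z, x_k) - 2 alpha_k f(x_k) + sum_i x_k,i (e^(-t_i) - 1 + t_i)
  with t_i = alpha_k (grad f(x_k))_i, and the cap alpha_k ||grad f||_inf <= 1.79 allows the bound
  e^(-t) <= 1 - t + 1.1 t^2, after which the Polyak cap alpha_k ||grad f||_x^2 <= f(x_k) absorbs the quadratic term.
  Summing, the decreases 9/10 alpha_k f(x_k) have total at most D_h(z, x_0).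
  Since D_h(z, x) >= 3/5 ||x||_1 - ||z||_1, the iterates stay in an l1-ball, and both branches of the stepsize then
  force alpha_k f(x_k) to be large whenever f(x_k) exceeds the claimed bound, which yields the rate.
  A cluster point of the iterates with vanishing residual lies in S_+; the distance to it is monotone and
  tends to 0 along a subsequence, hence everywhere, and D_h dominates (sqrt x_i - sqrt l_i)^2.
\<close>

lemma exp_neg_le_Maclaurin:
  fixes t :: real
  assumes "\<bar>t\<bar> \<le> 179/100"
  shows "exp (- t) \<le> 1 - t + t\<^sup>2/2 - t^3/6 + t^4/24 - t^5/120 + 15/1440 * t^6"
proof -
  obtain s where s: "\<bar>s\<bar> \<le> \<bar>-t\<bar>"
    and e: "exp (-t) = (\<Sum>m<6. ((-t) ^ m) / fact m) + (exp s / fact 6) * (-t) ^ 6"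
    using Maclaurin_exp_le[of "-t" 6] by blast
  have "exp s \<le> exp (1 + 79/100)" using s assms by simp
  also have "exp (1 + 79/100::real) = exp 1 * exp (79/100)" by (simp flip: exp_add)
  also have "\<dots> \<le> 3 * (1 + 79/100 + (79/100)\<^sup>2)"
    using exp_le exp_bound[of "79/100::real"] by (intro mult_mono) auto
  finally have "exp s \<le> 15/2" by (simp add: power2_eq_square)
  then have "exp s * t^6 \<le> t^6 * (15/2)"
    using mult_right_mono[of "exp s" "15/2" "t^6"] by (simp add: mult.commute zero_le_even_power)
  then show ?thesis unfolding e by (simp add: lessThan_nat_numeral fact_numeral)
qed

lemma exp_neg_le_quadratic:
  fixes t :: real
  assumes "\<bar>t\<bar> \<le> 179/100"
  shows "exp (- t) \<le> 1 - t + 11/10 * t\<^sup>2"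
proof -
  let ?a = "\<bar>t\<bar>"
  have "-(t^3) \<le> t\<^sup>2 * ?a"
  proof -
    have "-(t^3) = t\<^sup>2 * (-t)" by (simp add: power2_eq_square power3_eq_cube)
    also have "\<dots> \<le> t\<^sup>2 * ?a" by (intro mult_left_mono) auto
    finally show ?thesis .
  qed
  moreover have "-(t^5) \<le> t\<^sup>2 * ?a ^ 3"
  proof -
    have "-(t^5) = t^4 * (-t)" by (simp add: eval_nat_numeral)
    also have "\<dots> \<le> t^4 * ?a" by (intro mult_left_mono) auto
    also have "\<dots> = t\<^sup>2 * ?a ^ 3" by (simp add: power_even_abs eval_nat_numeral)
    finally show ?thesis .
  qed
  moreover have "t^4 = t\<^sup>2 * ?a ^ 2" "t^6 = t\<^sup>2 * ?a ^ 4"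
    by (simp_all add: power_even_abs flip: power_add)
  ultimately have "t\<^sup>2/2 - t^3/6 + t^4/24 - t^5/120 + 15/1440 * t^6
      \<le> t\<^sup>2 * (1/2 + ?a/6 + ?a ^ 2/24 + ?a ^ 3/120 + 15/1440 * ?a ^ 4)"
    by (simp add: algebra_simps)
  also have "\<dots> \<le> t\<^sup>2 * (11/10)"
  proof (intro mult_left_mono)
    have "1/2 + ?a/6 + ?a ^ 2/24 + ?a ^ 3/120 + 15/1440 * ?a ^ 4
        \<le> 1/2 + (179/100)/6 + (179/100)^2/24 + (179/100)^3/120 + 15/1440 * (179/100)^4"
      using assms by (intro add_mono divide_right_mono mult_left_mono power_mono) auto
    also have "\<dots> \<le> 11/10" by (simp add: eval_nat_numeral)
    finally show "1/2 + ?a/6 + ?a ^ 2/24 + ?a ^ 3/120 + 15/1440 * ?a ^ 4 \<le> 11/10" .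
  qed simp
  finally show ?thesis using exp_neg_le_Maclaurin[OF assms] by linarith
qed

lemma ln_le_two_fifths:
  fixes t :: real
  assumes "0 < t"
  shows "ln t \<le> 2/5 * t"
proof -
  have "5/2 \<le> exp (1::real)" using exp_lower_Taylor_quadratic[of 1] by simp
  then have "ln (5/2) \<le> (1::real)"
    by (metis ln_exp ln_le_cancel_iff exp_gt_zero zero_less_divide_iff zero_less_numeral)
  moreover have "ln t = ln (5/2) + ln (2 * t / 5)"
    using assms by (simp flip: ln_mult_pos)
  moreover have "ln (2 * t / 5) \<le> 2 * t / 5 - 1" using assms by (intro ln_le_minus_one) simp
  ultimately show ?thesis by simp
qed

lemma lsq_nonneg: "0 \<le> lsq A b x"
  by (simp add: lsq_def)

lemma lsq_eq_inner: "lsq A b x = 1/2 * ((A *v x - b) \<bullet> (A *v x - b))"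
  by (simp add: lsq_def power2_norm_eq_inner)

lemma lsq_grad_inner_feasible:
  assumes "z \<in> feas_nonneg A b"
  shows "(\<Sum>i\<in>UNIV. lsq_grad A b x $ i * (z $ i - x $ i)) = - 2 * lsq A b x"
proof -
  have Az: "A *v z = b" using assms by (simp add: feas_nonneg_def)
  have "(\<Sum>i\<in>UNIV. lsq_grad A b x $ i * (z $ i - x $ i)) = lsq_grad A b x \<bullet> (z - x)"
    by (simp add: inner_vec_def)
  also have "\<dots> = (A *v x - b) \<bullet> (A *v (z - x))"
    by (simp add: lsq_grad_def dot_lmul_matrix)
  also have "\<dots> = - ((A *v x - b) \<bullet> (A *v x - b))"
    by (simp add: matrix_vector_mult_diff_distrib Az inner_diff_right inner_commute algebra_simps)
  finally show ?thesis by (simp add: lsq_eq_inner)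
qed

lemma lsq_grad_neq_0_imp_lsq_pos:
  assumes "lsq_grad A b x \<noteq> 0"
  shows "0 < lsq A b x"
  using assms lsq_nonneg[of A b x] by (auto simp: lsq_def lsq_grad_def order_le_less)

lemma max_col_sq_ge: "(\<Sum>i\<in>UNIV. (A $ i $ j)\<^sup>2) \<le> max_col_sq A"
  unfolding max_col_sq_def by (rule Max_ge) auto

lemma max_col_sq_nonneg: "0 \<le> max_col_sq A"
  using max_col_sq_ge[of A] sum_nonneg[of UNIV "\<lambda>i. (A $ i $ j)\<^sup>2" for j] by (meson order_trans zero_le_power2)

lemma lsq_grad_nth_sq_le: "(lsq_grad A b x $ j)\<^sup>2 \<le> max_col_sq A * (2 * lsq A b x)"
proof -
  define c where "c = (\<chi> i. A $ i $ j)"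
  define r where "r = A *v x - b"
  have "lsq_grad A b x $ j = c \<bullet> r"
    by (simp add: lsq_grad_def c_def r_def vector_matrix_mult_def inner_vec_def mult.commute)
  moreover have "(c \<bullet> r)\<^sup>2 \<le> (c \<bullet> c) * (r \<bullet> r)" by (rule Cauchy_Schwarz_ineq)
  moreover have "c \<bullet> c \<le> max_col_sq A"
    using max_col_sq_ge[of A j] by (simp add: c_def inner_vec_def power2_eq_square)
  ultimately show ?thesis
    by (simp add: lsq_eq_inner r_def) (meson inner_ge_zero mult_right_mono order_trans)
qed

lemma local_norm_sq_nonneg: "\<forall>i. 0 \<le> x $ i \<Longrightarrow> 0 \<le> local_norm_sq x v"
  by (simp add: local_norm_sq_def sum_nonneg)

lemma local_norm_sq_pos:
  assumes "\<forall>i. 0 < x $ i" "v \<noteq> 0"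
  shows "0 < local_norm_sq x v"
proof -
  obtain j where j: "v $ j \<noteq> 0" using assms(2) by (metis vec_eq_iff zero_index)
  have "0 < x $ j * (v $ j)\<^sup>2" using j assms(1) by simp
  also have "\<dots> \<le> local_norm_sq x v"
    unfolding local_norm_sq_def using assms(1) by (intro member_le_sum) (simp_all add: less_imp_le)
  finally show ?thesis .
qed

lemma local_norm_sq_lsq_grad_le:
  assumes "\<forall>i. 0 \<le> x $ i"
  shows "local_norm_sq x (lsq_grad A b x) \<le> one_norm x * (max_col_sq A * (2 * lsq A b x))"
proof -
  have "local_norm_sq x (lsq_grad A b x) \<le> (\<Sum>i\<in>UNIV. x $ i * (max_col_sq A * (2 * lsq A b x)))"
    unfolding local_norm_sq_def using assms by (intro sum_mono mult_left_mono lsq_grad_nth_sq_le) auto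
  also have "\<dots> = one_norm x * (max_col_sq A * (2 * lsq A b x))"
    using assms by (simp add: one_norm_def sum_distrib_right)
  finally show ?thesis .
qed

lemma abs_nth_le_inf_norm: "\<bar>v $ i\<bar> \<le> inf_norm v"
  unfolding inf_norm_def by (rule Max_ge) auto

lemma inf_norm_nonneg: "0 \<le> inf_norm v"
  using abs_nth_le_inf_norm abs_ge_zero order_trans by blast

lemma inf_norm_pos: "v \<noteq> 0 \<Longrightarrow> 0 < inf_norm v"
  by (metis abs_nth_le_inf_norm order_less_le_trans vec_eq_iff zero_index zero_less_abs_iff)

lemma inf_norm_attained: "\<exists>j. inf_norm v = \<bar>v $ j\<bar>"
proof -
  have "inf_norm v \<in> (\<lambda>i. \<bar>v $ i\<bar>) ` UNIV" unfolding inf_norm_def by (rule Max_in) auto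
  then show ?thesis by auto
qed

lemma inf_norm_lsq_grad_sq_le: "(inf_norm (lsq_grad A b x))\<^sup>2 \<le> max_col_sq A * (2 * lsq A b x)"
  using inf_norm_attained[of "lsq_grad A b x"] lsq_grad_nth_sq_le[of A b x] by (metis power2_abs)

lemma tendsto_lsq: "g \<longlonglongrightarrow> l \<Longrightarrow> (\<lambda>j. lsq A b (g j)) \<longlonglongrightarrow> lsq A b l"
  unfolding lsq_def by (intro tendsto_intros bounded_linear.tendsto[OF matrix_vector_mul_bounded_linear])

definition entropy_breg_term :: "real \<Rightarrow> real \<Rightarrow> real" where
  "entropy_breg_term z x = (if z = 0 then 0 else z * ln (z / x)) - z + x"

lemma entropy_breg_eq_sum: "entropy_breg z x = (\<Sum>i\<in>UNIV. entropy_breg_term (z $ i) (x $ i))"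
  by (simp add: entropy_breg_def entropy_breg_term_def)

lemma sqrt_diff_sq_le_entropy_breg_term:
  assumes "0 \<le> z" "0 < x"
  shows "(sqrt x - sqrt z)\<^sup>2 \<le> entropy_breg_term z x"
proof (cases "z = 0")
  case True
  then show ?thesis using assms by (simp add: entropy_breg_term_def)
next
  case False
  define v where "v = sqrt z / sqrt x"
  have v: "0 < v" "z / x = v\<^sup>2" using False assms by (auto simp: v_def power_divide)
  have "ln (1 / v) \<le> 1 / v - 1" using v by (intro ln_le_minus_one) simp
  then have "z * (2 - 2 / v) \<le> z * (2 * ln v)"
    using v assms by (intro mult_left_mono) (auto simp: ln_div)
  moreover have "z * (2 - 2 / v) = 2 * z - 2 * sqrt z * sqrt x"
    using False assms by (simp add: v_def field_simps)
  moreover have "(sqrt x - sqrt z)\<^sup>2 = x + z - 2 * sqrt z * sqrt x"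
    using assms by (simp add: power2_diff algebra_simps)
  ultimately show ?thesis using False v by (simp add: entropy_breg_term_def ln_realpow)
qed

lemma entropy_breg_term_nonneg: "0 \<le> z \<Longrightarrow> 0 < x \<Longrightarrow> 0 \<le> entropy_breg_term z x"
  using sqrt_diff_sq_le_entropy_breg_term[of z x] by (meson order_trans zero_le_power2)

lemma entropy_breg_term_ge_linear:
  assumes "0 \<le> z" "0 < x"
  shows "3/5 * x - z \<le> entropy_breg_term z x"
proof (cases "z = 0")
  case True
  then show ?thesis using assms by (simp add: entropy_breg_term_def)
next
  case False
  then have z: "0 < z" using assms by simp
  have "z * ln (x / z) \<le> z * (2/5 * (x / z))"
    using z assms by (intro mult_left_mono ln_le_two_fifths) auto
  moreover have "ln (z / x) = - ln (x / z)" using z assms by (simp add: ln_div)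
  ultimately show ?thesis using z by (simp add: entropy_breg_term_def)
qed

lemma entropy_breg_term_mult_exp_le:
  assumes "0 \<le> z" "0 < x" "\<bar>t\<bar> \<le> 179/100"
  shows "entropy_breg_term z (x * exp (- t)) \<le> entropy_breg_term z x + t * (z - x) + 11/10 * x * t\<^sup>2"
proof -
  have "x * exp (- t) \<le> x * (1 - t + 11/10 * t\<^sup>2)"
    using exp_neg_le_quadratic[OF assms(3)] assms(2) by (intro mult_left_mono) auto
  moreover have "ln (z / (x * exp (- t))) = ln (z / x) + t" if "z \<noteq> 0"
    using that assms by (simp add: ln_div ln_mult_pos)
  ultimately show ?thesis
    by (cases "z = 0") (auto simp: entropy_breg_term_def algebra_simps)
qed

lemma entropy_breg_nonneg:
  assumes "\<forall>i. 0 \<le> z $ i" "\<forall>i. 0 < x $ i"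
  shows "0 \<le> entropy_breg z x"
  unfolding entropy_breg_eq_sum using assms by (intro sum_nonneg entropy_breg_term_nonneg) auto

lemma one_norm_le_entropy_breg:
  assumes "\<forall>i. 0 \<le> z $ i" "\<forall>i. 0 < x $ i"
  shows "3/5 * one_norm x - one_norm z \<le> entropy_breg z x"
proof -
  have "3/5 * one_norm x - one_norm z = (\<Sum>i\<in>UNIV. 3/5 * x $ i - z $ i)"
    using assms by (simp add: one_norm_def sum_subtractf sum_distrib_left less_imp_le)
  also have "\<dots> \<le> entropy_breg z x"
    unfolding entropy_breg_eq_sum using assms by (intro sum_mono entropy_breg_term_ge_linear) auto
  finally show ?thesis .
qed

lemma sqrt_nth_diff_sq_le_entropy_breg:
  assumes "\<forall>i. 0 \<le> z $ i" "\<forall>i. 0 < x $ i"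
  shows "(sqrt (x $ i) - sqrt (z $ i))\<^sup>2 \<le> entropy_breg z x"
proof -
  have "(sqrt (x $ i) - sqrt (z $ i))\<^sup>2 \<le> entropy_breg_term (z $ i) (x $ i)"
    using assms by (intro sqrt_diff_sq_le_entropy_breg_term) auto
  also have "\<dots> \<le> entropy_breg z x"
    unfolding entropy_breg_eq_sum using assms by (intro member_le_sum entropy_breg_term_nonneg) auto
  finally show ?thesis .
qed

lemma tendsto_entropy_breg_0:
  assumes "\<forall>i. 0 \<le> l $ i" "g \<longlonglongrightarrow> l"
  shows "(\<lambda>j. entropy_breg l (g j)) \<longlonglongrightarrow> 0"
proof -
  have "(\<lambda>j. entropy_breg_term (l $ i) (g j $ i)) \<longlonglongrightarrow> 0" for i
  proof -
    have gi: "(\<lambda>j. g j $ i) \<longlonglongrightarrow> l $ i" using assms(2) by (rule tendsto_vec_nth)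
    have "(\<lambda>j. l $ i * ln (l $ i / g j $ i) - l $ i + g j $ i)
        \<longlonglongrightarrow> l $ i * ln (l $ i / l $ i) - l $ i + l $ i" if "l $ i \<noteq> 0"
      using that by (intro tendsto_intros gi) auto
    then show ?thesis using gi by (cases "l $ i = 0") (auto simp: entropy_breg_term_def)
  qed
  then show ?thesis
    unfolding entropy_breg_eq_sum by (rule tendsto_null_sum)
qed

lemma tendsto_of_entropy_breg_tendsto_0:
  assumes l: "\<forall>i. 0 \<le> l $ i" and g: "\<forall>j i. 0 < g j $ i"
    and D: "(\<lambda>j. entropy_breg l (g j)) \<longlonglongrightarrow> 0"
  shows "g \<longlonglongrightarrow> l"
proof (rule vec_tendstoI)
  fix i
  have "(\<lambda>j. (sqrt (g j $ i) - sqrt (l $ i))\<^sup>2) \<longlonglongrightarrow> 0"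
    by (rule tendsto_sandwich[of "\<lambda>_. 0" _ _ "\<lambda>j. entropy_breg l (g j)"])
      (use sqrt_nth_diff_sq_le_entropy_breg[OF l] g D in auto)
  then have "(\<lambda>j. sqrt (g j $ i) - sqrt (l $ i)) \<longlonglongrightarrow> 0"
    using tendsto_real_sqrt by (fastforce simp: tendsto_rabs_zero_iff)
  then have "(\<lambda>j. (sqrt (g j $ i))\<^sup>2) \<longlonglongrightarrow> (sqrt (l $ i))\<^sup>2"
    by (intro tendsto_power) (simp add: LIM_zero_iff)
  then show "(\<lambda>j. g j $ i) \<longlonglongrightarrow> l $ i" using g l by (simp add: less_imp_le)
qed

lemma emd_step_nth:
  "emd_step A b x $ i = x $ i * exp (- (polyak_step A b x * lsq_grad A b x $ i))"
  by (simp add: emd_step_def)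

lemma polyak_step_nonneg: "\<forall>i. 0 \<le> x $ i \<Longrightarrow> 0 \<le> polyak_step A b x"
  by (simp add: polyak_step_def lsq_nonneg local_norm_sq_nonneg inf_norm_nonneg)

text \<open>No positivity of the norms is needed for the two caps: division by 0 yields 0.\<close>

lemma polyak_step_local_norm_sq_le:
  assumes "\<forall>i. 0 \<le> x $ i"
  shows "polyak_step A b x * local_norm_sq x (lsq_grad A b x) \<le> lsq A b x"
proof -
  let ?N = "local_norm_sq x (lsq_grad A b x)"
  have "polyak_step A b x * ?N \<le> lsq A b x / ?N * ?N"
    using assms by (intro mult_right_mono local_norm_sq_nonneg) (auto simp: polyak_step_def)
  also have "\<dots> \<le> lsq A b x" by (cases "?N = 0") (simp_all add: lsq_nonneg)
  finally show ?thesis .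
qed

lemma polyak_step_inf_norm_le:
  "polyak_step A b x * inf_norm (lsq_grad A b x) \<le> 179/100"
proof -
  let ?G = "inf_norm (lsq_grad A b x)"
  have "polyak_step A b x * ?G \<le> (179/100) / ?G * ?G"
    by (intro mult_right_mono inf_norm_nonneg) (simp add: polyak_step_def)
  also have "\<dots> \<le> 179/100" by (cases "?G = 0") simp_all
  finally show ?thesis .
qed

lemma entropy_breg_emd_step_le:
  assumes z: "z \<in> feas_nonneg A b" and x: "\<forall>i. 0 < x $ i"
  shows "entropy_breg z (emd_step A b x) + 9/10 * (polyak_step A b x * lsq A b x) \<le> entropy_breg z x"
proof -
  let ?g = "lsq_grad A b x"
  define a where "a = polyak_step A b x"
  have x0: "\<forall>i. 0 \<le> x $ i" using x by (simp add: less_imp_le)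
  have a0: "0 \<le> a" using polyak_step_nonneg[OF x0] by (simp add: a_def)
  have "\<bar>a * ?g $ i\<bar> \<le> 179/100" for i
  proof -
    have "\<bar>a * ?g $ i\<bar> \<le> a * inf_norm ?g"
      using a0 abs_nth_le_inf_norm by (simp add: abs_mult) (intro mult_left_mono)
    then show ?thesis using polyak_step_inf_norm_le[of A b x] by (simp add: a_def)
  qed
  then have "entropy_breg_term (z $ i) (emd_step A b x $ i) \<le> entropy_breg_term (z $ i) (x $ i)
      + a * (?g $ i * (z $ i - x $ i)) + 11/10 * a\<^sup>2 * (x $ i * (?g $ i)\<^sup>2)" for i
    using entropy_breg_term_mult_exp_le[of "z $ i" "x $ i" "a * ?g $ i"] z x
    by (simp add: emd_step_nth a_def feas_nonneg_def power_mult_distrib algebra_simps)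
  then have "entropy_breg z (emd_step A b x) \<le> (\<Sum>i\<in>UNIV. entropy_breg_term (z $ i) (x $ i)
      + a * (?g $ i * (z $ i - x $ i)) + 11/10 * a\<^sup>2 * (x $ i * (?g $ i)\<^sup>2))"
    unfolding entropy_breg_eq_sum by (rule sum_mono)
  also have "\<dots> = entropy_breg z x + a * (- 2 * lsq A b x) + 11/10 * a\<^sup>2 * local_norm_sq x ?g"
  proof -
    have "(\<Sum>i\<in>UNIV. a * (?g $ i * (z $ i - x $ i))) = a * (- 2 * lsq A b x)"
      by (simp add: lsq_grad_inner_feasible[OF z] flip: sum_distrib_left)
    then show ?thesis
      by (simp add: sum.distrib entropy_breg_eq_sum local_norm_sq_def sum_distrib_left)
  qed
  finally have "entropy_breg z (emd_step A b x)
      \<le> entropy_breg z x - 2 * (a * lsq A b x) + 11/10 * (a\<^sup>2 * local_norm_sq x ?g)" by simp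
  moreover have "a\<^sup>2 * local_norm_sq x ?g \<le> a * lsq A b x"
    using mult_left_mono[OF polyak_step_local_norm_sq_le[OF x0] a0]
    by (simp add: a_def power2_eq_square mult.assoc)
  ultimately show ?thesis by (simp add: a_def)
qed

lemma polyak_step_progress:
  assumes x: "\<forall>i. 0 < x $ i" and g: "lsq_grad A b x \<noteq> 0"
  defines "f \<equiv> lsq A b x" and "u \<equiv> polyak_step A b x * lsq A b x" and "L \<equiv> max_col_sq A"
  shows "f \<le> 2 * L * one_norm x * u \<or> (179/100)\<^sup>2 * f \<le> 2 * L * u\<^sup>2"
proof -
  let ?N = "local_norm_sq x (lsq_grad A b x)" and ?G = "inf_norm (lsq_grad A b x)"
  have f: "0 < f" using lsq_grad_neq_0_imp_lsq_pos[OF g] by (simp add: f_def)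
  have N: "0 < ?N" using local_norm_sq_pos[OF x g] .
  have G: "0 < ?G" using inf_norm_pos[OF g] .
  have "polyak_step A b x = f / ?N \<or> polyak_step A b x = (179/100) / ?G"
    by (simp add: polyak_step_def f_def min_def)
  then show ?thesis
  proof
    assume a: "polyak_step A b x = f / ?N"
    have "?N \<le> one_norm x * (L * (2 * f))"
      using local_norm_sq_lsq_grad_le[of x A b] x by (simp add: L_def f_def less_imp_le)
    then have "f * f \<le> u * (2 * L * one_norm x * f)"
      using mult_left_mono[of ?N _ "f * f / ?N"] f N by (simp add: u_def a field_simps flip: f_def)
    then show ?thesis using f by (simp add: mult_ac)
  next
    assume a: "polyak_step A b x = (179/100) / ?G"
    have "(179/100)\<^sup>2 * f\<^sup>2 = u\<^sup>2 * ?G\<^sup>2" using G by (simp add: u_def a power_divide field_simps flip: f_def)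
    also have "\<dots> \<le> u\<^sup>2 * (2 * L * f)"
      using inf_norm_lsq_grad_sq_le[of A b x] by (intro mult_left_mono) (simp_all add: L_def f_def)
    finally have "((179/100)\<^sup>2 * f) * f \<le> (2 * L * u\<^sup>2) * f" by (simp add: power2_eq_square mult_ac)
    then show ?thesis using f by simp
  qed
qed

lemma polyak_rate_arith:
  fixes R c L s f u K :: real
  assumes R: "0 \<le> R" and c: "0 \<le> c" and L: "0 \<le> L" and K: "1 \<le> K" and u: "0 \<le> u"
    and s: "s \<le> 5/3 * (R + c)"
    and f: "4 * R * (R + c) * L < f * K"
    and progress: "f \<le> 2 * L * s * u \<or> (179/100)\<^sup>2 * f \<le> 2 * L * u\<^sup>2"
  shows "R < 9/10 * K * u"
  using progress
proof
  have Ku: "0 \<le> K * u" using K u by simp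
  assume "f \<le> 2 * L * s * u"
  also have "\<dots> \<le> 2 * L * (5/3 * (R + c)) * u"
    using s L u by (intro mult_right_mono mult_left_mono) auto
  finally have "f * K \<le> 2 * L * (5/3 * (R + c)) * u * K" using K by (intro mult_right_mono) auto
  moreover have "2 * L * (5/3 * (R + c)) * u * K = ((R + c) * L) * (10/3 * (K * u))"
    "4 * R * (R + c) * L = ((R + c) * L) * (4 * R)" by (simp_all add: algebra_simps)
  ultimately have "((R + c) * L) * (4 * R) < ((R + c) * L) * (10/3 * (K * u))"
    using f by linarith
  then have "4 * R < 10/3 * (K * u)" by (rule mult_left_less_imp_less) (use R c L in simp)
  with Ku show ?thesis by simp
next
  assume f': "(179/100)\<^sup>2 * f \<le> 2 * L * u\<^sup>2"
  have "4 * R * R * L \<le> 4 * R * (R + c) * L" using R c L by (intro mult_right_mono mult_left_mono) auto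
  then have "(179/100)\<^sup>2 * (4 * R * R * L) < (179/100)\<^sup>2 * (f * K)" using f by simp
  also have "\<dots> \<le> 2 * L * u\<^sup>2 * K" using mult_right_mono[OF f', of K] K by (simp add: mult.assoc)
  also have "\<dots> \<le> 2 * L * u\<^sup>2 * K\<^sup>2" using K L by (intro mult_left_mono) (auto simp: power2_eq_square)
  finally have "L * (32041/2500 * R\<^sup>2) < L * (2 * (K * u)\<^sup>2)"
    by (simp add: power2_eq_square mult_ac)
  then have "32041/2500 * R\<^sup>2 < 2 * (K * u)\<^sup>2" using L by (rule mult_left_less_imp_less)
  moreover have "(9/10 * K * u)\<^sup>2 = 81/100 * (K * u)\<^sup>2" by (simp add: power2_eq_square)
  ultimately have "R\<^sup>2 < (9/10 * K * u)\<^sup>2" using zero_le_power2[of "K * u"] by linarith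
  then show ?thesis by (rule power2_less_imp_less) (use K u in simp)
qed

lemma decseq_tendsto_0_of_comp:
  fixes X :: "nat \<Rightarrow> real"
  assumes "decseq X" "\<forall>i. 0 \<le> X i" "(\<lambda>j. X (s j)) \<longlonglongrightarrow> 0"
  shows "X \<longlonglongrightarrow> 0"
proof -
  obtain L where L: "X \<longlonglongrightarrow> L" "\<forall>i. L \<le> X i" using decseq_convergent[OF assms(1,2)] .
  have "L \<le> 0" using LIMSEQ_le_const[OF assms(3)] L(2) by blast
  moreover have "0 \<le> L" using LIMSEQ_le_const[OF L(1)] assms(2) by blast
  ultimately show ?thesis using L(1) by simp
qed

context
  fixes A :: "real^'n^'m" and b :: "real^'m" and x :: "nat \<Rightarrow> real^'n"
  assumes x0: "\<forall>i. 0 < x 0 $ i" and emd_seq: "\<forall>k. x (Suc k) = emd_step A b (x k)"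
begin

lemma emd_seq_pos: "\<forall>i. 0 < x k $ i"
  by (induction k) (simp_all add: x0 emd_seq emd_step_nth)

lemma entropy_breg_emd_seq_Suc_le:
  assumes "z \<in> feas_nonneg A b"
  shows "entropy_breg z (x (Suc k)) + 9/10 * (polyak_step A b (x k) * lsq A b (x k)) \<le> entropy_breg z (x k)"
  using entropy_breg_emd_step_le[OF assms emd_seq_pos] emd_seq by simp

lemma entropy_breg_emd_seq_antimono:
  assumes z: "z \<in> feas_nonneg A b" and "n \<le> k"
  shows "entropy_breg z (x k) \<le> entropy_breg z (x n)"
proof (rule lift_Suc_antimono_le[of "\<lambda>k. entropy_breg z (x k)", OF _ assms(2)])
  fix k
  have "0 \<le> polyak_step A b (x k) * lsq A b (x k)"
    using emd_seq_pos[of k] by (simp add: polyak_step_nonneg less_imp_le lsq_nonneg)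
  then show "entropy_breg z (x (Suc k)) \<le> entropy_breg z (x k)"
    using entropy_breg_emd_seq_Suc_le[OF z, of k] by linarith
qed

lemma sum_progress_le_entropy_breg:
  assumes z: "z \<in> feas_nonneg A b"
  shows "9/10 * (\<Sum>i\<le>k. polyak_step A b (x i) * lsq A b (x i)) \<le> entropy_breg z (x 0)"
proof -
  have "entropy_breg z (x (Suc k)) + 9/10 * (\<Sum>i\<le>k. polyak_step A b (x i) * lsq A b (x i))
      \<le> entropy_breg z (x 0)"
  proof (induction k)
    case 0
    show ?case using entropy_breg_emd_seq_Suc_le[OF z, of 0] by simp
  next
    case (Suc k)
    then show ?case using entropy_breg_emd_seq_Suc_le[OF z, of "Suc k"] by (simp add: algebra_simps)
  qed
  moreover have "0 \<le> entropy_breg z (x (Suc k))"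
    using z emd_seq_pos by (intro entropy_breg_nonneg) (auto simp: feas_nonneg_def)
  ultimately show ?thesis by linarith
qed

lemma one_norm_emd_seq_le:
  assumes z: "z \<in> feas_nonneg A b"
  shows "one_norm (x k) \<le> 5/3 * (entropy_breg z (x 0) + one_norm z)"
  using one_norm_le_entropy_breg[of z "x k"] entropy_breg_emd_seq_antimono[OF z, of 0 k] z emd_seq_pos
  by (simp add: feas_nonneg_def)

lemma min_lsq_emd_seq_le:
  assumes z: "z \<in> feas_nonneg A b"
  shows "Min ((\<lambda>i. lsq A b (x i)) ` {..k})
    \<le> 4 * entropy_breg z (x 0) * (entropy_breg z (x 0) + one_norm z) * max_col_sq A / real (k + 1)"
proof (rule ccontr)
  define R where "R = entropy_breg z (x 0)"
  define K where "K = real (k + 1)"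
  define u where "u i = polyak_step A b (x i) * lsq A b (x i)" for i
  have R: "0 \<le> R" and c: "0 \<le> one_norm z"
    using z x0 by (auto simp: R_def feas_nonneg_def one_norm_def intro: entropy_breg_nonneg sum_nonneg)
  assume "\<not> ?thesis"
  then have large: "4 * R * (R + one_norm z) * max_col_sq A < lsq A b (x i) * K" if "i \<le> k" for i
    using that by (simp add: not_le Min_gr_iff R_def K_def pos_divide_less_eq)
  have "R < 9/10 * K * u i" if "i \<le> k" for i
  proof (rule polyak_rate_arith[OF R c max_col_sq_nonneg _ _ _ large[OF that]])
    have "0 \<le> 4 * R * (R + one_norm z) * max_col_sq A" using R c max_col_sq_nonneg[of A] by simp
    then have "0 < lsq A b (x i) * K" using large[OF that] by linarith
    then have "0 < lsq A b (x i)" by (simp add: K_def zero_less_mult_iff)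
    then have "lsq_grad A b (x i) \<noteq> 0" using lsq_grad_inner_feasible[OF z, of "x i"] by auto
    then show "lsq A b (x i) \<le> 2 * max_col_sq A * one_norm (x i) * u i
        \<or> (179/100)\<^sup>2 * lsq A b (x i) \<le> 2 * max_col_sq A * (u i)\<^sup>2"
      using polyak_step_progress[OF emd_seq_pos] by (simp add: u_def)
    show "0 \<le> u i" using emd_seq_pos[of i] by (simp add: u_def polyak_step_nonneg less_imp_le lsq_nonneg)
    show "one_norm (x i) \<le> 5/3 * (R + one_norm z)" using one_norm_emd_seq_le[OF z] by (simp add: R_def)
  qed (simp add: K_def)
  then have "(\<Sum>i\<le>k. R) < (\<Sum>i\<le>k. 9/10 * K * u i)" by (intro sum_strict_mono) auto
  also have "\<dots> = K * (9/10 * (\<Sum>i\<le>k. u i))"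
    unfolding sum_distrib_left by (simp add: mult_ac)
  finally have "K * R < K * (9/10 * (\<Sum>i\<le>k. u i))" by (simp add: K_def mult.commute)
  moreover have "9/10 * (\<Sum>i\<le>k. u i) \<le> R"
    using sum_progress_le_entropy_breg[OF z] by (simp add: u_def R_def)
  ultimately show False by (simp add: K_def mult_le_cancel_left_pos)
qed

lemma ex_lsq_emd_seq_tendsto_0:
  assumes z: "z \<in> feas_nonneg A b"
  shows "\<exists>s. (\<lambda>j. lsq A b (x (s j))) \<longlonglongrightarrow> 0"
proof -
  define C where "C = 4 * entropy_breg z (x 0) * (entropy_breg z (x 0) + one_norm z) * max_col_sq A"
  have "\<exists>i. lsq A b (x i) \<le> C / real (Suc j)" for j
  proof -
    have "Min ((\<lambda>i. lsq A b (x i)) ` {..j}) \<in> (\<lambda>i. lsq A b (x i)) ` {..j}" by (rule Min_in) auto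
    then obtain i where "lsq A b (x i) = Min ((\<lambda>i. lsq A b (x i)) ` {..j})"
      by (metis (no_types, lifting) imageE)
    then show ?thesis using min_lsq_emd_seq_le[OF z, of j] by (metis C_def Suc_eq_plus1)
  qed
  then obtain s where s: "\<And>j. lsq A b (x (s j)) \<le> C / real (Suc j)" by metis
  have C: "(\<lambda>j. C / real (Suc j)) \<longlonglongrightarrow> 0" using LIMSEQ_Suc[OF lim_const_over_n[of C]] by simp
  have "(\<lambda>j. lsq A b (x (s j))) \<longlonglongrightarrow> 0"
    by (rule tendsto_sandwich[of "\<lambda>_. 0" _ _ "\<lambda>j. C / real (Suc j)"]) (use C s in \<open>auto simp: lsq_nonneg\<close>)
  then show ?thesis by blast
qed

lemma ex_feasible_limit_point:
  assumes z: "z \<in> feas_nonneg A b"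
  shows "\<exists>l \<in> feas_nonneg A b. \<exists>s. (x \<circ> s) \<longlonglongrightarrow> l"
proof -
  obtain s where s: "(\<lambda>j. lsq A b (x (s j))) \<longlonglongrightarrow> 0" using ex_lsq_emd_seq_tendsto_0[OF z] ..
  define B where "B = 5/3 * (entropy_breg z (x 0) + one_norm z)"
  have "norm (x k) \<le> B" for k
    using norm_le_l1_cart[of "x k"] one_norm_emd_seq_le[OF z, of k] by (simp add: one_norm_def B_def)
  then have "bounded (range (x \<circ> s))" unfolding bounded_iff by auto
  then obtain l r where r: "strict_mono r" and l: "(x \<circ> s \<circ> r) \<longlonglongrightarrow> l"
    using bounded_imp_convergent_subsequence by blast
  have "(\<lambda>j. lsq A b ((x \<circ> s \<circ> r) j)) \<longlonglongrightarrow> 0"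
    using LIMSEQ_subseq_LIMSEQ[OF s r] by (simp add: o_def)
  then have "lsq A b l = 0" using tendsto_lsq[OF l] LIMSEQ_unique by blast
  moreover have "0 \<le> l $ i" for i
    using tendsto_vec_nth[OF l, of i] emd_seq_pos
    by (intro LIMSEQ_le_const[of "\<lambda>j. (x \<circ> s \<circ> r) j $ i"]) (auto simp: less_imp_le)
  ultimately have "l \<in> feas_nonneg A b" by (simp add: feas_nonneg_def lsq_def)
  then show ?thesis using l by (metis comp_assoc)
qed

lemma emd_seq_converges:
  assumes "feas_nonneg A b \<noteq> {}"
  shows "\<exists>l \<in> feas_nonneg A b. x \<longlonglongrightarrow> l"
proof -
  obtain l s where l: "l \<in> feas_nonneg A b" and s: "(x \<circ> s) \<longlonglongrightarrow> l"
    using assms ex_feasible_limit_point by blast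
  have l0: "\<forall>i. 0 \<le> l $ i" using l by (simp add: feas_nonneg_def)
  have "(\<lambda>k. entropy_breg l (x k)) \<longlonglongrightarrow> 0"
  proof (rule decseq_tendsto_0_of_comp)
    show "decseq (\<lambda>k. entropy_breg l (x k))"
      using entropy_breg_emd_seq_antimono[OF l] by (simp add: decseq_def)
    show "\<forall>k. 0 \<le> entropy_breg l (x k)" using entropy_breg_nonneg[OF l0 emd_seq_pos] by simp
    show "(\<lambda>j. entropy_breg l (x (s j))) \<longlonglongrightarrow> 0"
      using tendsto_entropy_breg_0[OF l0 s] by (simp add: o_def)
  qed
  then have "x \<longlonglongrightarrow> l" using tendsto_of_entropy_breg_tendsto_0[OF l0] emd_seq_pos by blast
  then show ?thesis using l ..
qed

end

theorem theorem3p4: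
  fixes A :: "real^'n^'m" and b :: "real^'m" and x :: "nat \<Rightarrow> real^'n"
  assumes "feas_nonneg A b \<noteq> {}"
    and "\<forall>i. x 0 $ i > 0"
    and "\<forall>k. x (Suc k) = emd_step A b (x k)"
  shows "\<exists>xs \<in> feas_nonneg A b. x \<longlonglongrightarrow> xs \<and>
           (\<forall>k. Min ((\<lambda>i. lsq A b (x i)) ` {..k})
                \<le> 4 * entropy_breg xs (x 0) * (entropy_breg xs (x 0) + one_norm xs)
                    * max_col_sq A / real (k + 1))"
proof -
  obtain l where "l \<in> feas_nonneg A b" "x \<longlonglongrightarrow> l"
    using emd_seq_converges[OF assms(2,3,1)] ..
  then show ?thesis using min_lsq_emd_seq_le[OF assms(2,3)] by blast
qed

end
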